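(* Let $\theta_n>0$ and let $L_n\ge1$ be an integer. Let $X$ be a real tensor (the output of the first MatMul layer of a network on a given input, which is computed identically in the ANN and in the PASC SNN). Let $z^l=\widehat h(X)$ be the output of the first QCFS activation layer of the ANN, and let $s^l=(s^l(1),\dots,s^l(L_n))$ be the output of the PASC input-layer procedure (described in the context) on $X$. Then (a) $\sum_{i=1}^{L_n}s^l(i)=z^l$, and (b) every entry of $s^l$ lies in the set $\{0,\theta_n/L_n\}$.
   Context: The QCFS activation with quantization step $L_n$ and threshold $\theta_n$ is $\widehat h(X)=\theta_n\,\mathrm{clip}\!\left(\frac{1}{L_n}\left\lfloor \frac{X L_n}{\theta_n}+\frac12\right\rfloor,0,1\right)$ (elementwise), where $\mathrm{clip}(y,0,1)=\min(\max(y,0),1)$. $H$ denotes the Heaviside step function, $H(y)=1$ if $y\ge0$ and $0$ otherwise. PASC input-layer procedure (elementwise): set $\theta^*=\theta_n/L_n$ and initial membrane potential $\mathrm{mem}(0)=\widehat h(X)$; for $t=1,\dots,L_n$ set $s^l(t)=H(\mathrm{mem}(t-1)-\theta^* )\cdot\theta^*$ and $\mathrm{mem}(t)=\mathrm{mem}(t-1)-s^l(t)$; the output is the stack $s^l$ of $s^l(1),\dots,s^l(L_n)$. *)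

theory Defs
  imports Main Complex_Main
begin

definition clip01 :: "real \<Rightarrow> real" where
  "clip01 y = min (max y 0) 1"

definition heaviside :: "real \<Rightarrow> real" where
  "heaviside y = (if y \<ge> 0 then 1 else 0)"

definition qcfs :: "real \<Rightarrow> nat \<Rightarrow> real \<Rightarrow> real" where
  "qcfs theta L x = theta * clip01 ((1 / real L) * real_of_int \<lfloor>x * real L / theta + 1/2\<rfloor>)"

definition qcfs_tensor :: "real \<Rightarrow> nat \<Rightarrow> ('i \<Rightarrow> real) \<Rightarrow> ('i \<Rightarrow> real)" where
  "qcfs_tensor theta L X = (\<lambda>i. qcfs theta L (X i))"

text \<open>PASC input layer: membrane potential mem(t), with theta* = theta / L.\<close>
primrec pasc_mem :: "real \<Rightarrow> nat \<Rightarrow> real \<Rightarrow> nat \<Rightarrow> real" where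
  "pasc_mem theta L x 0 = qcfs theta L x"
| "pasc_mem theta L x (Suc t) =
     pasc_mem theta L x t - heaviside (pasc_mem theta L x t - theta / real L) * (theta / real L)"

text \<open>Spike at time step t (meaningful for 1 <= t <= L): s(t) = H(mem(t-1) - theta*) * theta*.\<close>
definition pasc_spike :: "real \<Rightarrow> nat \<Rightarrow> real \<Rightarrow> nat \<Rightarrow> real" where
  "pasc_spike theta L x t = heaviside (pasc_mem theta L x (t - 1) - theta / real L) * (theta / real L)"

definition pasc_input :: "real \<Rightarrow> nat \<Rightarrow> ('i \<Rightarrow> real) \<Rightarrow> nat \<Rightarrow> 'i \<Rightarrow> real" where
  "pasc_input theta L X = (\<lambda>t i. pasc_spike theta L (X i) t)"

end

theory Submission
  imports Defs
begin

text \<open>The QCFS output is \<open>k\<close> quanta \<open>theta / L\<close> with \<open>0 \<le> k \<le> L\<close>. The PASC membrane potential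
  then starts at \<open>k\<close> quanta and loses exactly one quantum per step while it is positive, so
  the spike train is \<open>k\<close> quanta followed by zeros: its sum over \<open>L \<ge> k\<close> steps is the QCFS output
  and each spike is \<open>0\<close> or one quantum.\<close>

lemma qcfs_eq_quanta:
  assumes "0 < L"
  obtains k :: nat where "k \<le> L" "qcfs theta L x = real k * (theta / real L)"
proof
  define m where "m = \<lfloor>x * real L / theta + 1/2\<rfloor>"
  define k where "k = nat (min (max m 0) (int L))"
  show "k \<le> L"
    unfolding k_def by linarith
  have "clip01 (1 / real L * real_of_int m) = min (max (real_of_int m) 0) (real L) / real L"
    using assms by (auto simp: clip01_def min_def max_def field_simps)
  also have "min (max (real_of_int m) 0) (real L) = real k"
    unfolding k_def by (simp add: min_def max_def)
  finally show "qcfs theta L x = real k * (theta / real L)"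
    unfolding qcfs_def m_def by simp
qed

lemma pasc_mem_quanta:
  assumes "0 < theta" "0 < L" "qcfs theta L x = real k * (theta / real L)"
  shows "pasc_mem theta L x t = real (k - t) * (theta / real L)"
proof (induction t)
  case 0
  show ?case using assms(3) by simp
next
  case (Suc t)
  let ?q = "theta / real L"
  have q_pos: "0 < ?q"
    using assms(1,2) by simp
  show ?case
  proof (cases "t < k")
    case True
    then have "1 * ?q \<le> real (k - t) * ?q"
      using q_pos by (intro mult_right_mono) auto
    then have "pasc_mem theta L x (Suc t) = pasc_mem theta L x t - ?q"
      using Suc.IH by (simp add: heaviside_def)
    also have "\<dots> = (real (k - t) - 1) * ?q"
      using Suc.IH by (simp add: algebra_simps)
    also have "real (k - t) - 1 = real (k - Suc t)"
      using True by simp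
    finally show ?thesis .
  next
    case False
    then show ?thesis
      using Suc.IH q_pos by (simp add: heaviside_def)
  qed
qed

lemma pasc_spike_quanta:
  assumes "0 < theta" "0 < L" "qcfs theta L x = real k * (theta / real L)" "1 \<le> t"
  shows "pasc_spike theta L x t = (if t \<le> k then theta / real L else 0)"
proof -
  let ?q = "theta / real L"
  have q_pos: "0 < ?q"
    using assms(1,2) by simp
  have mem: "pasc_mem theta L x (t - 1) = real (k - (t - 1)) * ?q"
    using pasc_mem_quanta[OF assms(1-3)] .
  show ?thesis
  proof (cases "t \<le> k")
    case True
    then have "1 * ?q \<le> real (k - (t - 1)) * ?q"
      using q_pos assms(4) by (intro mult_right_mono) auto
    then show ?thesis
      unfolding pasc_spike_def mem using True by (simp add: heaviside_def)
  next
    case False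
    then show ?thesis
      unfolding pasc_spike_def mem using q_pos by (simp add: heaviside_def)
  qed
qed

lemma sum_prefix_indicator:
  fixes c :: real
  assumes "k \<le> L"
  shows "(\<Sum>t = 1..L. if t \<le> k then c else 0) = real k * c"
proof -
  have "{1..L} \<inter> {t. t \<le> k} = {1..k}"
    using assms by auto
  then show ?thesis
    by (simp add: sum.If_cases)
qed

theorem theorem3:
  fixes theta :: real and L :: nat and X :: "'i \<Rightarrow> real"
  assumes "theta > 0" and "L \<ge> 1"
  shows "(\<lambda>i. \<Sum>t = 1..L. pasc_input theta L X t i) = qcfs_tensor theta L X
         \<and> (\<forall>t \<in> {1..L}. \<forall>i. pasc_input theta L X t i \<in> {0, theta / real L})"
proof -
  have L_pos: "0 < L"
    using assms(2) by simp
  have "(\<Sum>t = 1..L. pasc_spike theta L x t) = qcfs theta L x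
      \<and> (\<forall>t \<in> {1..L}. pasc_spike theta L x t \<in> {0, theta / real L})" for x
  proof -
    obtain k where k: "k \<le> L" "qcfs theta L x = real k * (theta / real L)"
      using qcfs_eq_quanta[OF L_pos] .
    have train: "pasc_spike theta L x t = (if t \<le> k then theta / real L else 0)"
      if "t \<in> {1..L}" for t
      using pasc_spike_quanta[OF assms(1) L_pos k(2)] that by simp
    have "(\<Sum>t = 1..L. pasc_spike theta L x t) = (\<Sum>t = 1..L. if t \<le> k then theta / real L else 0)"
      using train by (rule sum.cong[OF refl])
    then show ?thesis
      using sum_prefix_indicator[OF k(1)] k(2) train by simp
  qed
  then show ?thesis
    unfolding pasc_input_def qcfs_tensor_def by auto
qed

end
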